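(* Let $S=[S_1,\ldots,S_m]$ and $R=[R_1,\ldots,R_m]$ be two sequences of propositional formulae of the same length over the alphabet $X$. The lexicographic orders $S$ and $R$ are equivalent if and only if the formula $DIFF(S,R)$ is unsatisfiable.
   Context: Models are truth assignments. For a formula $F$: $I \leq_F J$ iff $I \models F$ or $J \not\models F$. For a sequence $S=[S_1,\ldots,S_m]$: $I \leq_S J$ iff either $S=[]$, or ($I \leq_{S_1} J$ and (either $J \not\leq_{S_1} I$ or $I \leq_{S'} J$)), where $S'=[S_2,\ldots,S_m]$. Two sequences are equivalent if their orders coincide on all pairs of models over $X$. Let $X=\{x_1,\ldots,x_n\}$ and let $Y=\{y_1,\ldots,y_n\}$, $Z=\{z_1,\ldots,z_n\}$ be disjoint sets of fresh variables; $F[Y/X]$ denotes $F$ with each $x_i$ replaced by $y_i$, and $F[Z/X]$ likewise with $z_i$. Define $STRICT(G) = G[Y/X] \wedge \neg G[Z/X]$ and $EQUIV(G) = (G[Y/X] \equiv G[Z/X])$. For fresh variables $m_1,\ldots,m_m,e_1,\ldots,e_m$, define $ORDER(M,E)$ as $O_1$ where $O_{m+1}=\top$ and $O_k = m_k \vee (e_k \wedge O_{k+1})$, i.e. $ORDER(M,E)= m_1 \vee (e_1 \wedge (m_2 \vee (e_2 \wedge \cdots)))$; similarly $ORDER(N,F)$ with fresh variables $n_1,\ldots,n_m,f_1,\ldots,f_m$. With further fresh variables $a,b$, $DIFF(S,R)$ is the conjunction of: $m_i \equiv STRICT(S_i)$ and $e_i \equiv EQUIV(S_i)$ for $i=1,\ldots,m$;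 $a \equiv ORDER(M,E)$; $n_i \equiv STRICT(R_i)$ and $f_i \equiv EQUIV(R_i)$ for $i=1,\ldots,m$; $b\equiv ORDER(N,F)$; and $a \not\equiv b$. *)

theory Defs
  imports Main
begin

datatype 'v form =
    Atom 'v
  | Top
  | Bot
  | Neg "'v form"
  | Conj "'v form" "'v form"
  | Disj "'v form" "'v form"
  | Iff "'v form" "'v form"

fun holds :: "('v \<Rightarrow> bool) \<Rightarrow> 'v form \<Rightarrow> bool" where
  "holds I (Atom v) = I v"
| "holds I Top = True"
| "holds I Bot = False"
| "holds I (Neg F) = (\<not> holds I F)"
| "holds I (Conj F G) = (holds I F \<and> holds I G)"
| "holds I (Disj F G) = (holds I F \<or> holds I G)"
| "holds I (Iff F G) = (holds I F = holds I G)"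

definition satisfiable :: "'v form \<Rightarrow> bool" where
  "satisfiable F = (\<exists>I. holds I F)"

definition le_form :: "'x form \<Rightarrow> ('x \<Rightarrow> bool) \<Rightarrow> ('x \<Rightarrow> bool) \<Rightarrow> bool" where
  "le_form F I J = (holds I F \<or> \<not> holds J F)"

fun le_seq :: "'x form list \<Rightarrow> ('x \<Rightarrow> bool) \<Rightarrow> ('x \<Rightarrow> bool) \<Rightarrow> bool" where
  "le_seq [] I J = True"
| "le_seq (F # S') I J = (le_form F I J \<and> (\<not> le_form F J I \<or> le_seq S' I J))"

definition seq_equiv :: "'x form list \<Rightarrow> 'x form list \<Rightarrow> bool" where
  "seq_equiv S R = (\<forall>I J. le_seq S I J = le_seq R I J)"

text \<open>Variables of the DIFF formula: copies y_i, z_i of the original variables,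
  and fresh variables m_k, e_k, n_k, f_k (k = 1..m), a, b.\<close>
datatype 'x dvar = Yv 'x | Zv 'x | Mv nat | Ev nat | Nv nat | Fv nat | Av | Bv

definition STRICT :: "'x form \<Rightarrow> 'x dvar form" where
  "STRICT G = Conj (map_form Yv G) (Neg (map_form Zv G))"

definition EQUIV :: "'x form \<Rightarrow> 'x dvar form" where
  "EQUIV G = Iff (map_form Yv G) (map_form Zv G)"

definition ORDER :: "(nat \<Rightarrow> 'v) \<Rightarrow> (nat \<Rightarrow> 'v) \<Rightarrow> nat \<Rightarrow> 'v form" where
  "ORDER mv ev m = foldr (\<lambda>k acc. Disj (Atom (mv k)) (Conj (Atom (ev k)) acc)) [1..<m+1] Top"

definition big_conj :: "'v form list \<Rightarrow> 'v form" where
  "big_conj Fs = foldr Conj Fs Top"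

definition DIFF :: "'x form list \<Rightarrow> 'x form list \<Rightarrow> 'x dvar form" where
  "DIFF S R = (let m = length S in big_conj (
       [Iff (Atom (Mv i)) (STRICT Si). (i, Si) \<leftarrow> zip [1..<m+1] S]
     @ [Iff (Atom (Ev i)) (EQUIV Si). (i, Si) \<leftarrow> zip [1..<m+1] S]
     @ [Iff (Atom Av) (ORDER Mv Ev m)]
     @ [Iff (Atom (Nv i)) (STRICT Ri). (i, Ri) \<leftarrow> zip [1..<m+1] R]
     @ [Iff (Atom (Fv i)) (EQUIV Ri). (i, Ri) \<leftarrow> zip [1..<m+1] R]
     @ [Iff (Atom Bv) (ORDER Nv Fv m)]
     @ [Neg (Iff (Atom Av) (Atom Bv))]))"

end

theory Submission
  imports Defs
begin

(* Copy a pair of models I, J to the y- and z-variables. Then m_k (e_k) says whether S_k holds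
   in I but not in J (in both or in neither), and ORDER(M,E) evaluates I \<le>_S J from these bits,
   because I \<le>_(F#S) J holds iff F strictly favours I, or F does not separate I and J and
   I \<le>_S J. The definitional clauses of DIFF(S,R) force every model to arise this way, so
   a and b are I \<le>_S J and I \<le>_R J, and a \<noteq> b says that the two orders disagree on (I, J). *)

lemma holds_map_form: "holds I (map_form f G) = holds (I \<circ> f) G"
  by (induction G) auto

lemma holds_big_conj: "holds I (big_conj Fs) \<longleftrightarrow> (\<forall>F\<in>set Fs. holds I F)"
  unfolding big_conj_def by (induction Fs) auto

lemma holds_STRICT: "holds v (STRICT G) \<longleftrightarrow> holds (v \<circ> Yv) G \<and> \<not> holds (v \<circ> Zv) G"
  by (simp add: STRICT_def holds_map_form)

lemma holds_EQUIV: "holds v (EQUIV G) \<longleftrightarrow> holds (v \<circ> Yv) G = holds (v \<circ> Zv) G"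
  by (simp add: EQUIV_def holds_map_form)

lemma le_seq_Cons_strict_or_equiv:
  "le_seq (F # S) I J \<longleftrightarrow> holds I F \<and> \<not> holds J F \<or> holds I F = holds J F \<and> le_seq S I J"
  by (auto simp: le_form_def)

lemma holds_foldr_order:
  assumes "length ks = length S"
    and "\<forall>(k, F) \<in> set (zip ks S).
           v (mv k) = (holds I F \<and> \<not> holds J F) \<and> v (ev k) = (holds I F = holds J F)"
  shows "holds v (foldr (\<lambda>k acc. Disj (Atom (mv k)) (Conj (Atom (ev k)) acc)) ks Top)
           = le_seq S I J"
  using assms
  by (induction ks S rule: list_induct2)
    (auto simp: le_seq_Cons_strict_or_equiv simp del: le_seq.simps(2))

definition defines_strict_equiv ::
    "('x dvar \<Rightarrow> bool) \<Rightarrow> (nat \<Rightarrow> 'x dvar) \<Rightarrow> (nat \<Rightarrow> 'x dvar) \<Rightarrow> 'x form list \<Rightarrow> bool" where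
  "defines_strict_equiv v mv ev S \<longleftrightarrow>
     (\<forall>(k, F) \<in> set (zip [1..<length S+1] S).
        v (mv k) = holds v (STRICT F) \<and> v (ev k) = holds v (EQUIV F))"

lemma holds_ORDER:
  assumes "defines_strict_equiv v mv ev S"
  shows "holds v (ORDER mv ev (length S)) = le_seq S (v \<circ> Yv) (v \<circ> Zv)"
  unfolding ORDER_def
  using assms
  by (intro holds_foldr_order)
    (auto simp: defines_strict_equiv_def holds_STRICT holds_EQUIV simp del: upt_Suc)

lemma holds_DIFF:
  assumes "length S = length R"
  shows "holds v (DIFF S R) \<longleftrightarrow>
     defines_strict_equiv v Mv Ev S \<and> defines_strict_equiv v Nv Fv R \<and>
     v Av = le_seq S (v \<circ> Yv) (v \<circ> Zv) \<and> v Bv = le_seq R (v \<circ> Yv) (v \<circ> Zv) \<and> v Av \<noteq> v Bv"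
proof -
  have "holds v (DIFF S R) \<longleftrightarrow>
     defines_strict_equiv v Mv Ev S \<and> defines_strict_equiv v Nv Fv R \<and>
     v Av = holds v (ORDER Mv Ev (length S)) \<and> v Bv = holds v (ORDER Nv Fv (length R)) \<and>
     v Av \<noteq> v Bv"
    unfolding DIFF_def Let_def holds_big_conj defines_strict_equiv_def assms
    by (simp del: upt_Suc add: ball_Un case_prod_beta) blast
  then show ?thesis
    using holds_ORDER[of v Mv Ev S] holds_ORDER[of v Nv Fv R] by blast
qed

lemma satisfiable_DIFF_iff:
  assumes "length S = length R"
  shows "satisfiable (DIFF S R) \<longleftrightarrow> (\<exists>I J. le_seq S I J \<noteq> le_seq R I J)"
proof
  assume "satisfiable (DIFF S R)"
  then show "\<exists>I J. le_seq S I J \<noteq> le_seq R I J"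
    unfolding satisfiable_def holds_DIFF[OF assms] by metis
next
  assume "\<exists>I J. le_seq S I J \<noteq> le_seq R I J"
  then obtain I J where differ: "le_seq S I J \<noteq> le_seq R I J"
    by blast
  \<comment> \<open>bit \<open>k\<close> describes \<open>S ! (k - 1)\<close>: \<open>DIFF\<close> numbers the formulas from 1\<close>
  define v where "v w = (case w of
      Yv x \<Rightarrow> I x | Zv x \<Rightarrow> J x
    | Mv k \<Rightarrow> holds I (S ! (k - 1)) \<and> \<not> holds J (S ! (k - 1))
    | Ev k \<Rightarrow> holds I (S ! (k - 1)) = holds J (S ! (k - 1))
    | Nv k \<Rightarrow> holds I (R ! (k - 1)) \<and> \<not> holds J (R ! (k - 1))
    | Fv k \<Rightarrow> holds I (R ! (k - 1)) = holds J (R ! (k - 1))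
    | Av \<Rightarrow> le_seq S I J | Bv \<Rightarrow> le_seq R I J)" for w
  have copies: "v \<circ> Yv = I" "v \<circ> Zv = J"
    by (auto simp: v_def)
  have "defines_strict_equiv v Mv Ev S" "defines_strict_equiv v Nv Fv R"
    unfolding defines_strict_equiv_def
    by (auto simp: set_zip holds_STRICT holds_EQUIV copies v_def simp del: upt_Suc)
  then have "holds v (DIFF S R)"
    unfolding holds_DIFF[OF assms] using differ by (simp add: copies v_def)
  then show "satisfiable (DIFF S R)"
    unfolding satisfiable_def by blast
qed

theorem theorem9:
  fixes S R :: "('x::finite) form list"
  assumes "length S = length R"
  shows "seq_equiv S R \<longleftrightarrow> \<not> satisfiable (DIFF S R)"
  using satisfiable_DIFF_iff[OF assms] unfolding seq_equiv_def by blast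

end
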